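(* Suppose block indices are drawn independently and uniformly at random from $[n]$ (one draw per subroutine call by a worker), and an iteration is completed once updates for $\tau$ distinct blocks have been collected (updates for an already-collected block being overwritten/redundant). Then: (i) the expected number of subroutine calls (draws) needed to complete an iteration is $\tau+\sum_{i=1}^{\tau-1}\frac{i}{n-i}$; (ii) if $0.02n<\tau<0.6n$, then with probability at least $1-\exp(-n/60)$, no more than $2\tau$ draws suffice to complete an iteration. *)

theory Defs
  imports "HOL-Probability.Probability"
begin

text \<open>Block indices are drawn i.i.d. uniformly from [n], relabelled as {0..<n}.
  An outcome is an infinite stream of draws.\<close>
definition draw_space :: "nat \<Rightarrow> nat stream measure" where
  "draw_space n = stream_space (measure_pmf (pmf_of_set {..<n}))"

definition draws_to_complete :: "nat \<Rightarrow> nat stream \<Rightarrow> nat" where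
  "draws_to_complete tau \<omega> = (LEAST t. card (set (stake t \<omega>)) = tau)"

end

theory Submission
  imports Defs "HOL-Analysis.Harmonic_Numbers"
begin

text \<open>With \<open>s\<close> distinct blocks already collected, \<open>incomplete_prob n tau t s\<close> is the
  probability that \<open>t\<close> further draws still leave fewer than \<open>tau\<close> of them; conditioning on
  the first draw gives its recursion. The expected number of draws is the tail sum
  \<open>\<Sum>\<^sub>t incomplete_prob n tau t 0\<close>, and the same recursion shows that this tail sum
  at \<open>s\<close> exceeds the one at \<open>s + 1\<close> by \<open>n/(n - s)\<close>, the mean of a geometric stage.

  For the tail bound, \<open>incomplete_prob n tau t s \<le> completion_pgf n tau y s * y^t\<close> is
  Markov's inequality for \<open>y^-T\<close>. With \<open>c = tau/n\<close>, \<open>y = 3c/2\<close> and \<open>t = 2 tau\<close>,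
  comparing \<open>ln (completion_pgf n tau y 0)\<close> with an integral bounds the logarithm of the
  failure probability by \<open>n (c ln c - (1 - c) ln (1 - c) - (c/2) ln (4/3))\<close>, which is at
  most \<open>-n/60\<close> for \<open>0.02 < c < 0.6\<close>.\<close>

lemma space_draw_space [simp]: "space (draw_space n) = UNIV"
  unfolding draw_space_def by (simp add: space_stream_space)

lemma prob_space_draw_space: "prob_space (draw_space n)"
  unfolding draw_space_def by (rule prob_space.prob_space_stream_space[OF prob_space_measure_pmf])

lemma sets_draw_space_stake: "{\<omega>. P (stake t \<omega>)} \<in> sets (draw_space n)"
proof -
  have "Measurable.pred (draw_space n) (\<lambda>\<omega>. P (stake t \<omega>))"
    unfolding draw_space_def by measurable
  then show ?thesis by (simp add: pred_def)
qed

lemma measurable_draws_to_complete [measurable]: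
  "draws_to_complete tau \<in> measurable (draw_space n) (count_space UNIV)"
  unfolding draws_to_complete_def draw_space_def by measurable

lemma card_set_stake_mono: "t \<le> t' \<Longrightarrow> card (set (stake t \<omega>)) \<le> card (set (stake t' \<omega>))"
  by (metis card_mono finite_set le_add_diff_inverse set_append stake_add sup_ge1)

lemma card_set_stake_Suc_le: "card (set (stake (Suc t) \<omega>)) \<le> Suc (card (set (stake t \<omega>)))"
  unfolding stake_Suc by (simp add: card_insert_if)

lemma card_set_stake_hits:
  "tau \<le> card (set (stake m \<omega>)) \<Longrightarrow> \<exists>t\<le>m. card (set (stake t \<omega>)) = tau"
proof (induction m)
  case (Suc m)
  show ?case
  proof (cases "tau \<le> card (set (stake m \<omega>))")
    case True
    then show ?thesis using Suc.IH le_SucI by blast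
  next
    case False
    then show ?thesis using Suc.prems card_set_stake_Suc_le[of m \<omega>] by (intro exI[of _ "Suc m"]) simp
  qed
qed simp

lemma draws_to_complete_le:
  "tau \<le> card (set (stake m \<omega>)) \<Longrightarrow> draws_to_complete tau \<omega> \<le> m"
proof -
  assume "tau \<le> card (set (stake m \<omega>))"
  then obtain t where t: "t \<le> m" "card (set (stake t \<omega>)) = tau"
    using card_set_stake_hits by blast
  have "draws_to_complete tau \<omega> \<le> t"
    unfolding draws_to_complete_def by (rule Least_le) (rule t(2))
  with t(1) show ?thesis by simp
qed

lemma less_draws_to_complete_iff:
  assumes "\<exists>t. card (set (stake t \<omega>)) = tau"
  shows "m < draws_to_complete tau \<omega> \<longleftrightarrow> card (set (stake m \<omega>)) < tau"
proof -
  have "card (set (stake (draws_to_complete tau \<omega>) \<omega>)) = tau"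
    unfolding draws_to_complete_def using assms by (rule LeastI_ex)
  then show ?thesis
    using draws_to_complete_le[of tau m \<omega>] card_set_stake_mono[of "draws_to_complete tau \<omega>" m \<omega>]
    by linarith
qed

lemma sum_card_insert:
  fixes f :: "nat \<Rightarrow> 'a::comm_semiring_1"
  assumes "finite U" "A \<subseteq> U"
  shows "(\<Sum>x\<in>U. f (card (insert x A)))
    = of_nat (card A) * f (card A) + of_nat (card U - card A) * f (Suc (card A))"
proof -
  have fin: "finite A" using assms finite_subset by blast
  have "(\<Sum>x\<in>U. f (card (insert x A)))
      = (\<Sum>x\<in>A. f (card (insert x A))) + (\<Sum>x\<in>U - A. f (card (insert x A)))"
    using assms by (metis sum.subset_diff add.commute)
  also have "\<dots> = (\<Sum>x\<in>A. f (card A)) + (\<Sum>x\<in>U - A. f (Suc (card A)))"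
    using fin by (intro arg_cong2[where f = "(+)"] sum.cong) (auto simp: insert_absorb)
  finally show ?thesis using assms fin by (simp add: card_Diff_subset)
qed

lemma emeasure_draw_space_stake_Suc:
  assumes "0 < n"
  shows "emeasure (draw_space n) {\<omega>. P (stake (Suc t) \<omega>)}
    = (\<Sum>x<n. emeasure (draw_space n) {\<omega>. P (x # stake t \<omega>)}) / of_nat n"
proof -
  let ?M = "measure_pmf (pmf_of_set {..<n})"
  have "emeasure (draw_space n) {\<omega>. P (stake (Suc t) \<omega>)}
      = (\<integral>\<^sup>+x. emeasure (stream_space ?M)
          {\<omega>\<in>space (stream_space ?M). x ## \<omega> \<in> {\<omega>. P (stake (Suc t) \<omega>)}} \<partial>?M)"
    using sets_draw_space_stake unfolding draw_space_def
    by (intro prob_space.emeasure_stream_space prob_space_measure_pmf)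
  also have "\<dots> = (\<integral>\<^sup>+x. emeasure (draw_space n) {\<omega>. P (x # stake t \<omega>)} \<partial>?M)"
    by (simp add: draw_space_def space_stream_space)
  also have "\<dots> = (\<Sum>x<n. emeasure (draw_space n) {\<omega>. P (x # stake t \<omega>)}) / of_nat (card {..<n})"
    using assms by (intro nn_integral_pmf_of_set) auto
  finally show ?thesis by simp
qed

fun incomplete_prob :: "nat \<Rightarrow> nat \<Rightarrow> nat \<Rightarrow> nat \<Rightarrow> real" where
  "incomplete_prob n tau 0 s = (if s < tau then 1 else 0)"
| "incomplete_prob n tau (Suc t) s =
    real s / real n * incomplete_prob n tau t s
    + (real n - real s) / real n * incomplete_prob n tau t (Suc s)"

lemma incomplete_prob_eq_0: "tau \<le> s \<Longrightarrow> incomplete_prob n tau t s = 0"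
  by (induction t arbitrary: s) auto

lemma incomplete_prob_nonneg:
  assumes "tau \<le> n"
  shows "0 \<le> incomplete_prob n tau t s"
proof (induction t arbitrary: s)
  case (Suc t)
  show ?case
  proof (cases "s < tau")
    case True
    with assms Suc.IH show ?thesis by (simp add: add_nonneg_nonneg mult_nonneg_nonneg)
  qed (simp add: incomplete_prob_eq_0)
qed simp

lemma emeasure_card_union_stake_less:
  assumes n: "0 < n" and tau: "tau \<le> n" and A: "A \<subseteq> {..<n}"
  shows "emeasure (draw_space n) {\<omega>. card (A \<union> set (stake t \<omega>)) < tau}
    = ennreal (incomplete_prob n tau t (card A))"
  using A
proof (induction t arbitrary: A)
  case 0
  interpret prob_space "draw_space n" by (rule prob_space_draw_space)
  show ?case using emeasure_space_1 by simp
next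
  case (Suc t)
  let ?R = "incomplete_prob n tau t"
  have "emeasure (draw_space n) {\<omega>. card (A \<union> set (stake (Suc t) \<omega>)) < tau}
      = (\<Sum>x<n. emeasure (draw_space n) {\<omega>. card (insert x A \<union> set (stake t \<omega>)) < tau}) / of_nat n"
    using emeasure_draw_space_stake_Suc[OF n, of "\<lambda>xs. card (A \<union> set xs) < tau"] by simp
  also have "\<dots> = (\<Sum>x<n. ennreal (?R (card (insert x A)))) / of_nat n"
  proof -
    have "emeasure (draw_space n) {\<omega>. card (insert x A \<union> set (stake t \<omega>)) < tau}
        = ennreal (?R (card (insert x A)))" if "x < n" for x
      by (rule Suc.IH) (use Suc.prems that in auto)
    then show ?thesis by simp
  qed
  also have "\<dots> = ennreal ((\<Sum>x<n. ?R (card (insert x A))) / real n)"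
    using n incomplete_prob_nonneg[OF tau]
    by (simp add: sum_ennreal sum_nonneg divide_ennreal ennreal_of_nat_eq_real_of_nat)
  also have "(\<Sum>x<n. ?R (card (insert x A))) / real n = incomplete_prob n tau (Suc t) (card A)"
  proof -
    have "card A \<le> n" using Suc.prems by (metis card_lessThan card_mono finite_lessThan)
    then show ?thesis
      using sum_card_insert[OF finite_lessThan Suc.prems, of ?R]
      by (simp add: of_nat_diff add_divide_distrib)
  qed
  finally show ?case .
qed

lemma measure_card_stake_less:
  assumes "0 < n" "tau \<le> n"
  shows "measure (draw_space n) {\<omega>. card (set (stake t \<omega>)) < tau} = incomplete_prob n tau t 0"
  using emeasure_card_union_stake_less[OF assms, of "{}" t] incomplete_prob_nonneg[OF assms(2)]
  by (simp add: measure_def)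

text \<open>\<open>completion_pgf n tau y s\<close> is \<open>E[y^-T]\<close> for the number \<open>T\<close> of draws needed to go from
  \<open>s\<close> to \<open>tau\<close> collected blocks: each factor is the generating function of a geometric stage.\<close>

definition completion_pgf :: "nat \<Rightarrow> nat \<Rightarrow> real \<Rightarrow> nat \<Rightarrow> real" where
  "completion_pgf n tau y s = (\<Prod>j\<in>{s..<tau}. (1 - real j / real n) / (y - real j / real n))"

lemma one_le_completion_pgf:
  assumes "y \<le> 1" "\<And>j. j < tau \<Longrightarrow> real j / real n < y"
  shows "1 \<le> completion_pgf n tau y s"
  unfolding completion_pgf_def using assms by (intro prod_ge_1) (auto simp: field_simps)

lemma completion_pgf_Suc:
  "s < tau \<Longrightarrow> completion_pgf n tau y s
    = (1 - real s / real n) / (y - real s / real n) * completion_pgf n tau y (Suc s)"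
  unfolding completion_pgf_def by (simp add: prod.atLeast_Suc_lessThan)

lemma incomplete_prob_le_completion_pgf:
  assumes n: "0 < n" and tau: "tau \<le> n" and y: "0 < y" "y \<le> 1"
    and yj: "\<And>j. j < tau \<Longrightarrow> real j / real n < y"
  shows "incomplete_prob n tau t s \<le> completion_pgf n tau y s * y ^ t"
proof (induction t arbitrary: s)
  case 0
  show ?case using one_le_completion_pgf[of y tau n s] y yj by simp
next
  case (Suc t)
  let ?G = "completion_pgf n tau y"
  show ?case
  proof (cases "s < tau")
    case True
    define a where "a = real s / real n"
    have a: "0 \<le> a" "a < 1" "a < y"
      using n tau True yj[OF True] by (auto simp: a_def field_simps)
    have "incomplete_prob n tau (Suc t) s
        = a * incomplete_prob n tau t s + (1 - a) * incomplete_prob n tau t (Suc s)"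
      using n by (simp add: a_def diff_divide_distrib)
    also have "\<dots> \<le> a * (?G s * y ^ t) + (1 - a) * (?G (Suc s) * y ^ t)"
      using a Suc.IH by (intro add_mono mult_left_mono) auto
    also have "\<dots> = y ^ t * (a * ?G s + (1 - a) * ?G (Suc s))"
      by (simp add: algebra_simps)
    also have "(1 - a) * ?G (Suc s) = (y - a) * ?G s"
      using completion_pgf_Suc[OF True, of n y] a by (simp add: a_def[symmetric])
    finally show ?thesis by (simp add: algebra_simps)
  next
    case False
    then show ?thesis
      using one_le_completion_pgf[of y tau n s] y yj by (simp add: incomplete_prob_eq_0)
  qed
qed

lemma summable_incomplete_prob:
  assumes n: "0 < n" and tau: "tau \<le> n"
  shows "summable (\<lambda>t. incomplete_prob n tau t s)"
proof (cases "tau = 0")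
  case False
  define y where "y = (2 * real tau - 1) / (2 * real n)"
  have y: "0 < y" "y < 1"
    using False n tau by (simp_all add: y_def field_simps)
  have yj: "real j / real n < y" if "j < tau" for j
  proof -
    have "real (Suc j) \<le> real tau" using that by (simp only: of_nat_le_iff Suc_le_eq)
    then show ?thesis using n by (simp add: y_def field_simps)
  qed
  show ?thesis
  proof (rule summable_comparison_test)
    show "\<exists>N. \<forall>t\<ge>N. norm (incomplete_prob n tau t s) \<le> completion_pgf n tau y s * y ^ t"
      using incomplete_prob_le_completion_pgf[OF n tau _ _ yj] incomplete_prob_nonneg[OF tau] y
      by auto
    show "summable (\<lambda>t. completion_pgf n tau y s * y ^ t)"
      using y by (intro summable_mult summable_geometric) simp
  qed
qed (simp add: incomplete_prob_eq_0)

lemma suminf_incomplete_prob_Suc: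
  assumes n: "0 < n" and tau: "tau \<le> n" and s: "s < tau"
  shows "(\<Sum>t. incomplete_prob n tau t s)
    = real n / (real n - real s) + (\<Sum>t. incomplete_prob n tau t (Suc s))"
proof -
  define E where "E s' = (\<Sum>t. incomplete_prob n tau t s')" for s'
  have S: "summable (\<lambda>t. incomplete_prob n tau t s')" for s'
    by (rule summable_incomplete_prob[OF n tau])
  have "(\<lambda>t. incomplete_prob n tau (Suc t) s)
      sums (real s / real n * E s + (real n - real s) / real n * E (Suc s))"
    unfolding incomplete_prob.simps E_def by (intro sums_add sums_mult summable_sums S)
  then have "(\<lambda>t. incomplete_prob n tau t s)
      sums (real s / real n * E s + (real n - real s) / real n * E (Suc s) + incomplete_prob n tau 0 s)"
    by (rule iffD1[OF sums_Suc_iff[of "\<lambda>t. incomplete_prob n tau t s"]])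
  then have "E s = real s / real n * E s + (real n - real s) / real n * E (Suc s) + 1"
    using s unfolding E_def by (simp add: sums_iff)
  then have "(real n - real s) * E s = real n + (real n - real s) * E (Suc s)"
    using n by (simp add: field_simps)
  moreover have "real s < real n" using s tau by simp
  ultimately show ?thesis unfolding E_def by (simp add: field_simps)
qed

lemma suminf_incomplete_prob:
  assumes "0 < n" "tau \<le> n" "s \<le> tau"
  shows "(\<Sum>t. incomplete_prob n tau t s) = (\<Sum>i\<in>{s..<tau}. real n / (real n - real i))"
  using assms(3)
proof (induction s rule: inc_induct)
  case base
  then show ?case by (simp add: incomplete_prob_eq_0)
next
  case (step s)
  then show ?case
    using suminf_incomplete_prob_Suc[OF assms(1,2) step.hyps(2)]
    by (simp add: sum.atLeast_Suc_lessThan)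
qed

lemma AE_draws_complete:
  assumes n: "0 < n" and tau: "tau \<le> n"
  shows "AE \<omega> in draw_space n. \<exists>t. card (set (stake t \<omega>)) = tau"
proof (rule AE_I')
  let ?N = "{\<omega>. \<forall>t. card (set (stake t \<omega>)) < tau}"
  have "?N \<in> sets (draw_space n)"
  proof -
    have "Measurable.pred (draw_space n) (\<lambda>\<omega>. \<forall>t. card (set (stake t \<omega>)) < tau)"
      unfolding draw_space_def by measurable
    then show ?thesis by (simp add: pred_def)
  qed
  moreover have "emeasure (draw_space n) ?N \<le> ennreal (incomplete_prob n tau t 0)" for t
    using emeasure_mono[OF _ sets_draw_space_stake, of ?N "\<lambda>xs. card (set xs) < tau" t n]
      emeasure_card_union_stake_less[OF n tau, of "{}" t] by auto
  moreover have "(\<lambda>t. ennreal (incomplete_prob n tau t 0)) \<longlonglongrightarrow> ennreal 0"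
    by (intro tendsto_ennrealI summable_LIMSEQ_zero summable_incomplete_prob[OF n tau])
  ultimately have "emeasure (draw_space n) ?N \<le> 0"
    using LIMSEQ_le_const[of "\<lambda>t. ennreal (incomplete_prob n tau t 0)"] by fastforce
  with \<open>?N \<in> sets (draw_space n)\<close> show "?N \<in> null_sets (draw_space n)"
    by (simp add: null_sets_def)
  have "card (set (stake t \<omega>)) < tau" if "\<not> (\<exists>t. card (set (stake t \<omega>)) = tau)" for \<omega> t
    using that card_set_stake_hits[of tau t \<omega>] by (meson not_less)
  then show "{\<omega> \<in> space (draw_space n). \<not> (\<exists>t. card (set (stake t \<omega>)) = tau)} \<subseteq> ?N"
    by auto
qed

lemma ennreal_of_nat_eq_suminf_indicator:
  "ennreal (real k) = (\<Sum>m. if m < k then 1 else 0)"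
  by (subst suminf_finite[of "{..<k}"]) (auto simp: ennreal_of_nat_eq_real_of_nat)

lemma nn_integral_draws_to_complete:
  assumes n: "0 < n" and tau: "tau \<le> n"
  shows "(\<integral>\<^sup>+\<omega>. ennreal (real (draws_to_complete tau \<omega>)) \<partial>draw_space n)
    = ennreal (\<Sum>t. incomplete_prob n tau t 0)"
proof -
  have "(\<integral>\<^sup>+\<omega>. ennreal (real (draws_to_complete tau \<omega>)) \<partial>draw_space n)
      = (\<Sum>m. \<integral>\<^sup>+\<omega>. (if m < draws_to_complete tau \<omega> then 1 else 0) \<partial>draw_space n)"
    unfolding ennreal_of_nat_eq_suminf_indicator by (intro nn_integral_suminf) measurable
  also have "\<dots> = (\<Sum>m. ennreal (incomplete_prob n tau m 0))"
  proof (rule suminf_cong)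
    fix m
    have "(\<integral>\<^sup>+\<omega>. (if m < draws_to_complete tau \<omega> then 1 else 0) \<partial>draw_space n)
        = (\<integral>\<^sup>+\<omega>. indicator {\<omega>. card (set (stake m \<omega>)) < tau} \<omega> \<partial>draw_space n)"
      using AE_draws_complete[OF n tau]
      by (intro nn_integral_cong_AE) (auto simp: less_draws_to_complete_iff split: split_indicator)
    then show "(\<integral>\<^sup>+\<omega>. (if m < draws_to_complete tau \<omega> then 1 else 0) \<partial>draw_space n)
        = ennreal (incomplete_prob n tau m 0)"
      using emeasure_card_union_stake_less[OF n tau, of "{}" m] sets_draw_space_stake by simp
  qed
  also have "\<dots> = ennreal (\<Sum>t. incomplete_prob n tau t 0)"
    using incomplete_prob_nonneg[OF tau] summable_incomplete_prob[OF n tau]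
    by (intro suminf_ennreal2) auto
  finally show ?thesis .
qed

lemma sum_n_div_n_minus_eq:
  assumes "tau \<le> n"
  shows "(\<Sum>i\<in>{0..<tau}. real n / (real n - real i))
    = real tau + (\<Sum>i=1..tau-1. real i / (real n - real i))"
proof -
  have "(\<Sum>i\<in>{0..<tau}. real n / (real n - real i))
      = (\<Sum>i\<in>{0..<tau}. 1 + real i / (real n - real i))"
    using assms by (intro sum.cong) (auto simp: field_simps)
  also have "(\<Sum>i\<in>{0..<tau}. real i / (real n - real i)) = (\<Sum>i=1..tau-1. real i / (real n - real i))"
    by (cases tau) (auto simp: atLeastLessThanSuc_atLeastAtMost sum.atLeast_Suc_atMost)
  ultimately show ?thesis by (simp add: sum.distrib)
qed

lemma measure_draws_to_complete_le:
  assumes "0 < n" "tau \<le> n"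
  shows "1 - incomplete_prob n tau m 0
    \<le> measure (draw_space n) {\<omega> \<in> space (draw_space n). draws_to_complete tau \<omega> \<le> m}"
proof -
  interpret prob_space "draw_space n" by (rule prob_space_draw_space)
  have "1 - incomplete_prob n tau m 0
      = prob (space (draw_space n) - {\<omega>. card (set (stake m \<omega>)) < tau})"
    using prob_compl[OF sets_draw_space_stake[of "\<lambda>xs. card (set xs) < tau" m n]]
      measure_card_stake_less[OF assms] by simp
  also have "\<dots> \<le> prob {\<omega> \<in> space (draw_space n). draws_to_complete tau \<omega> \<le> m}"
  proof (rule finite_measure_mono)
    have "Measurable.pred (draw_space n) (\<lambda>\<omega>. draws_to_complete tau \<omega> \<le> m)"
      by measurable
    then show "{\<omega> \<in> space (draw_space n). draws_to_complete tau \<omega> \<le> m} \<in> events"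
      by (simp add: pred_def)
  qed (auto simp: draws_to_complete_le not_less)
  finally show ?thesis .
qed

lemma mult_le_diff_of_deriv_mono:
  fixes F f :: "real \<Rightarrow> real"
  assumes "a \<le> b"
    and "\<And>x. a \<le> x \<Longrightarrow> x \<le> b \<Longrightarrow> (F has_real_derivative f x) (at x)"
    and "mono_on {a..b} f"
  shows "(b - a) * f a \<le> F b - F a"
proof (cases "a = b")
  case False
  then obtain z where z: "a < z" "z < b" "F b - F a = (b - a) * f z"
    using MVT2[of a b F f] assms(1,2) by fastforce
  moreover have "f a \<le> f z"
    using z assms(3) by (auto intro: mono_onD)
  ultimately show ?thesis using assms(1) by (simp add: mult_left_mono)
qed simp

lemma sum_le_diff_of_deriv_mono:
  fixes F f :: "real \<Rightarrow> real"
  assumes "0 \<le> h"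
    and "\<And>x. a \<le> x \<Longrightarrow> x \<le> a + real m * h \<Longrightarrow> (F has_real_derivative f x) (at x)"
    and "mono_on {a..a + real m * h} f"
  shows "(\<Sum>j<m. h * f (a + real j * h)) \<le> F (a + real m * h) - F a"
  using assms(2,3)
proof (induction m)
  case (Suc m)
  have le: "a + real m * h \<le> a + real (Suc m) * h" using assms(1) by (simp add: algebra_simps)
  have "(\<Sum>j<m. h * f (a + real j * h)) \<le> F (a + real m * h) - F a"
    using Suc.prems le order_trans
    by (intro Suc.IH) (auto intro: mono_on_subset[OF Suc.prems(2)])
  moreover have "(a + real (Suc m) * h - (a + real m * h)) * f (a + real m * h)
      \<le> F (a + real (Suc m) * h) - F (a + real m * h)"
  proof (rule mult_le_diff_of_deriv_mono[OF le])
    have "a \<le> a + real m * h" using assms(1) by simp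
    then show "(F has_real_derivative f x) (at x)"
      if "a + real m * h \<le> x" "x \<le> a + real (Suc m) * h" for x
      using that Suc.prems(1) by simp
    show "mono_on {a + real m * h..a + real (Suc m) * h} f"
      using \<open>a \<le> a + real m * h\<close> by (intro mono_on_subset[OF Suc.prems(2)]) auto
  qed
  ultimately show ?case by (simp add: algebra_simps)
qed simp

lemma mono_on_ln_diff:
  fixes y :: real
  assumes "y \<le> 1"
  shows "mono_on {..<y} (\<lambda>x. ln (1 - x) - ln (y - x))"
proof (rule mono_onI)
  fix x z assume xz: "x \<in> {..<y}" "z \<in> {..<y}" "x \<le> z"
  have pos: "0 < 1 - x" "0 < y - x" "0 < 1 - z" "0 < y - z" using xz assms by auto
  have "(1 - z) * (y - x) - (1 - x) * (y - z) = (z - x) * (1 - y)" by (simp add: algebra_simps)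
  also have "\<dots> \<ge> 0" using xz assms by simp
  finally have "(1 - x) / (y - x) \<le> (1 - z) / (y - z)" using pos by (simp add: divide_simps)
  then have "ln ((1 - x) / (y - x)) \<le> ln ((1 - z) / (y - z))" using pos by simp
  then show "ln (1 - x) - ln (y - x) \<le> ln (1 - z) - ln (y - z)" using pos by (simp add: ln_div)
qed

lemma ln_completion_pgf_le:
  fixes n tau :: nat and y :: real
  defines "c \<equiv> real tau / real n"
  assumes n: "0 < n" and y: "c < y" "y \<le> 1"
  shows "ln (completion_pgf n tau y 0)
    \<le> real n * ((y - c) * ln (y - c) - (1 - c) * ln (1 - c) - y * ln y)"
proof -
  define \<Phi> where "\<Phi> x = (y - x) * ln (y - x) - (1 - x) * ln (1 - x)" for x
  have yj: "real j / real n < y" if "j < tau" for j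
  proof -
    have "real j / real n < c" using that n unfolding c_def by (simp add: divide_strict_right_mono)
    then show ?thesis using y(1) by simp
  qed
  have pos: "0 < 1 - real j / real n" "0 < y - real j / real n" if "j < tau" for j
    using yj[OF that] y(2) by linarith+
  have "ln (completion_pgf n tau y 0) = (\<Sum>j<tau. ln ((1 - real j / real n) / (y - real j / real n)))"
    unfolding completion_pgf_def atLeast0LessThan
  proof (rule ln_prod)
    show "(1 - real j / real n) / (y - real j / real n) \<noteq> 0" if "j \<in> {..<tau}" for j
      using divide_pos_pos[OF pos[of j]] that by (metis lessThan_iff order_less_irrefl)
  qed simp
  also have "\<dots> = (\<Sum>j<tau. ln (1 - real j / real n) - ln (y - real j / real n))"
    using pos by (intro sum.cong refl ln_divide_pos) auto
  also have "\<dots> = real n * (\<Sum>j<tau. 1 / real n * (ln (1 - (0 + real j * (1 / real n)))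
      - ln (y - (0 + real j * (1 / real n)))))"
    using n by (simp add: sum_distrib_left)
  also have "(\<Sum>j<tau. 1 / real n * (ln (1 - (0 + real j * (1 / real n)))
      - ln (y - (0 + real j * (1 / real n))))) \<le> \<Phi> (0 + real tau * (1 / real n)) - \<Phi> 0"
  proof (rule sum_le_diff_of_deriv_mono)
    fix x assume "0 \<le> x" "x \<le> 0 + real tau * (1 / real n)"
    then have "x < y" using y(1) unfolding c_def by simp
    then show "(\<Phi> has_real_derivative ln (1 - x) - ln (y - x)) (at x)"
      unfolding \<Phi>_def[abs_def] using y(2) by (auto intro!: derivative_eq_intros)
  next
    show "mono_on {0..0 + real tau * (1 / real n)} (\<lambda>x. ln (1 - x) - ln (y - x))"
      using y unfolding c_def by (intro mono_on_subset[OF mono_on_ln_diff]) auto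
  qed simp
  finally show ?thesis using n unfolding \<Phi>_def c_def by (simp add: mult_left_mono)
qed

lemma ln_four_thirds_ge: "2 / 7 \<le> ln (4 / 3 :: real)"
  using ln_approx_bounds[of "4/3" 1] by (simp add: eval_nat_numeral)

lemma xlnx_gap_le:
  fixes c :: real
  assumes "0 < c" "c < 1"
  shows "c * ln c - (1 - c) * ln (1 - c) \<le> c * ln c + c"
proof -
  have "ln (1 / (1 - c)) \<le> 1 / (1 - c) - 1" using assms by (intro ln_le_minus_one) simp
  then have "- ln (1 - c) \<le> c / (1 - c)" using assms by (simp add: ln_div field_simps)
  then have "(1 - c) * - ln (1 - c) \<le> c" using assms by (simp add: field_simps)
  then show ?thesis by simp
qed

lemma has_real_derivative_xlnx_gap:
  fixes x :: real
  assumes "0 < x" "x < 1"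
  shows "((\<lambda>c. c * ln c - (1 - c) * ln (1 - c)) has_real_derivative ln x + ln (1 - x) + 2) (at x)"
  using assms by (auto intro!: derivative_eq_intros simp: field_simps)

lemma xlnx_gap_deriv_le:
  fixes x :: real
  assumes "0 < x" "x < 1"
  shows "ln x + ln (1 - x) + 2 \<le> 2 / 3"
proof -
  have "x * (1 - x) \<le> 1 / 4" using zero_le_power2[of "x - 1/2"] by (simp add: power2_eq_square algebra_simps)
  then have "ln (x * (1 - x)) \<le> ln (1 / 4)" using assms by simp
  moreover have "ln (1 / 4 :: real) = - 2 * ln 2" using ln_realpow[of 2 2] by (simp add: ln_div)
  ultimately show ?thesis using assms ln2_ge_two_thirds by (simp add: ln_mult)
qed

lemma xlnx_gap_deriv_nonneg:
  fixes x :: real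
  assumes "1 / 4 \<le> x" "x \<le> 1 / 2"
  shows "0 \<le> ln x + ln (1 - x) + 2"
proof -
  have "(x - 1 / 4) * (3 / 4 - x) = x * (1 - x) - 3 / 16" by (simp add: field_simps)
  moreover have "0 \<le> (x - 1 / 4) * (3 / 4 - x)" using assms by simp
  ultimately have "3 / 16 \<le> x * (1 - x)" by linarith
  then have "ln (3 / 16) \<le> ln (x * (1 - x))" using assms by (intro ln_mono) auto
  moreover have "ln (3 / 16 :: real) = - 2 * ln 2 - ln (4 / 3)"
    using ln_realpow[of 2 2] ln_realpow[of 2 4] by (simp add: ln_div)
  moreover have "ln (4 / 3 :: real) \<le> 1 / 3" using ln_le_minus_one[of "4/3 :: real"] by simp
  ultimately show ?thesis using assms ln2_le_25_over_36 by (simp add: ln_mult)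
qed

lemma xlnx_gap_nonpos:
  fixes c :: real
  assumes "1 / 4 \<le> c" "c \<le> 1 / 2"
  shows "c * ln c - (1 - c) * ln (1 - c) \<le> 0"
proof (cases "c = 1 / 2")
  case True
  show ?thesis unfolding True by simp
next
  case False
  have lt: "c < 1 / 2" using False assms by simp
  have der: "((\<lambda>c. c * ln c - (1 - c) * ln (1 - c)) has_real_derivative ln x + ln (1 - x) + 2) (at x)"
    if "c \<le> x" "x \<le> 1 / 2" for x
    using that assms by (intro has_real_derivative_xlnx_gap) auto
  obtain z where z: "c < z" "z < 1 / 2"
    and eq: "(1/2 * ln (1/2) - (1 - 1/2) * ln (1 - 1/2)) - (c * ln c - (1 - c) * ln (1 - c))
      = (1 / 2 - c) * (ln z + ln (1 - z) + 2)"
    using MVT2[OF lt der] by blast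
  have "0 \<le> (1 / 2 - c) * (ln z + ln (1 - z) + 2)"
    using z assms xlnx_gap_deriv_nonneg[of z] by simp
  moreover have "1/2 * ln (1/2) - (1 - 1/2) * ln (1 - 1/2) = (0::real)" by simp
  ultimately show ?thesis using eq by linarith
qed

lemma xlnx_gap_le_above_half:
  fixes c :: real
  assumes "1 / 2 \<le> c" "c < 1"
  shows "c * ln c - (1 - c) * ln (1 - c) \<le> 2 / 3 * (c - 1 / 2)"
proof (cases "c = 1 / 2")
  case True
  show ?thesis unfolding True by simp
next
  case False
  have lt: "1 / 2 < c" using False assms by simp
  have der: "((\<lambda>c. c * ln c - (1 - c) * ln (1 - c)) has_real_derivative ln x + ln (1 - x) + 2) (at x)"
    if "1 / 2 \<le> x" "x \<le> c" for x
    using that assms by (intro has_real_derivative_xlnx_gap) auto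
  obtain z where z: "1 / 2 < z" "z < c"
    and eq: "(c * ln c - (1 - c) * ln (1 - c)) - (1/2 * ln (1/2) - (1 - 1/2) * ln (1 - 1/2))
      = (c - 1 / 2) * (ln z + ln (1 - z) + 2)"
    using MVT2[OF lt der] by blast
  have "(c - 1 / 2) * (ln z + ln (1 - z) + 2) \<le> (c - 1 / 2) * (2 / 3)"
    using z assms xlnx_gap_deriv_le[of z] by (intro mult_left_mono) auto
  moreover have "1/2 * ln (1/2) - (1 - 1/2) * ln (1 - 1/2) = (0::real)" by simp
  ultimately show ?thesis using eq by linarith
qed

lemma xlnx_gap_bound:
  fixes c :: real
  assumes c: "1 / 50 < c" "c < 3 / 5"
  shows "c * ln c - (1 - c) * ln (1 - c) \<le> c / 7 - 1 / 60"
proof -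
  have ln4: "ln (1 / 4 :: real) = - 2 * ln 2" and ln16: "ln (1 / 16 :: real) = - 4 * ln 2"
    using ln_realpow[of 2 2] ln_realpow[of 2 4] by (simp_all add: ln_div)
  consider "c \<le> 1 / 16" | "1 / 16 < c" "c \<le> 1 / 4" | "1 / 4 < c" "c \<le> 1 / 2" | "1 / 2 < c"
    by linarith
  then show ?thesis
  proof cases
    case 1
    have "ln c \<le> - 8 / 3" using 1 c ln_mono[of c "1/16"] ln16 ln2_ge_two_thirds by simp
    then have "c * ln c \<le> c * (- 8 / 3)" using c by (intro mult_left_mono) auto
    then show ?thesis using xlnx_gap_le[of c] c by linarith
  next
    case 2
    have "ln c \<le> - 4 / 3" using 2 c ln_mono[of c "1/4"] ln4 ln2_ge_two_thirds by simp
    then have "c * ln c \<le> c * (- 4 / 3)" using c by (intro mult_left_mono) auto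
    then show ?thesis using xlnx_gap_le[of c] c 2 by linarith
  next
    case 3
    then have "c * ln c - (1 - c) * ln (1 - c) \<le> 0" by (intro xlnx_gap_nonpos) auto
    then show ?thesis using 3 by linarith
  next
    case 4
    then have "c * ln c - (1 - c) * ln (1 - c) \<le> 2 / 3 * (c - 1 / 2)"
      using c by (intro xlnx_gap_le_above_half) auto
    moreover have "2 / 3 * (c - 1 / 2) \<le> c / 7 - 1 / 60" using c by (simp add: field_simps)
    ultimately show ?thesis by linarith
  qed
qed

lemma incomplete_prob_twice_tau_le:
  assumes n: "0 < n" and tau: "0.02 * real n < real tau" "real tau < 0.6 * real n"
  shows "incomplete_prob n tau (2 * tau) 0 \<le> exp (- real n / 60)"
proof -
  define c where "c = real tau / real n"
  define y where "y = 3 / 2 * c"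
  have c: "1 / 50 < c" "c < 3 / 5" and tau_eq: "real tau = real n * c"
    using n tau by (auto simp: c_def field_simps)
  have y: "0 < y" "y \<le> 1" "c < y" and "y - c = c / 2" using c by (auto simp: y_def)
  have tau_le: "tau \<le> n" using tau by linarith
  have yj: "real j / real n < y" if "j < tau" for j
  proof -
    have "real j / real n < c" using that n unfolding c_def by (simp add: divide_strict_right_mono)
    then show ?thesis using y(3) by simp
  qed
  let ?G = "completion_pgf n tau y 0"
  have G_pos: "0 < ?G" using one_le_completion_pgf[of y tau n 0] y yj by simp
  have "incomplete_prob n tau (2 * tau) 0 \<le> ?G * y ^ (2 * tau)"
    using incomplete_prob_le_completion_pgf[OF n tau_le y(1,2) yj] .
  also have "\<dots> = exp (ln ?G + 2 * real tau * ln y)"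
  proof -
    have "2 * real tau * ln y = ln (y ^ (2 * tau))" using y(1) by (simp add: ln_realpow)
    then show ?thesis using G_pos y(1) by (simp add: exp_add)
  qed
  also have "ln ?G + 2 * real tau * ln y
      \<le> real n * ((y - c) * ln (y - c) - (1 - c) * ln (1 - c) - y * ln y) + 2 * real tau * ln y"
    using ln_completion_pgf_le[of n tau y] n y unfolding c_def by simp
  also have "\<dots> = real n * (c / 2 * (ln y + ln (c / 2)) - (1 - c) * ln (1 - c))"
    unfolding tau_eq \<open>y - c = c / 2\<close> by (simp add: y_def algebra_simps)
  also have "ln y + ln (c / 2) = 2 * ln c - ln (4 / 3)"
    using c ln_realpow[of 2 2] by (simp add: y_def ln_mult ln_div)
  also have "real n * (c / 2 * (2 * ln c - ln (4 / 3)) - (1 - c) * ln (1 - c)) \<le> real n * (- 1 / 60)"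
  proof (rule mult_left_mono)
    have "c / 2 * (2 * ln c - ln (4 / 3)) = c * ln c - c / 2 * ln (4 / 3)"
      by (simp add: algebra_simps)
    moreover have "c / 2 * (2 / 7) \<le> c / 2 * ln (4 / 3)"
      using c ln_four_thirds_ge by (intro mult_left_mono) auto
    ultimately show "c / 2 * (2 * ln c - ln (4 / 3)) - (1 - c) * ln (1 - c) \<le> - 1 / 60"
      using xlnx_gap_bound[OF c] by linarith
  qed simp
  finally show ?thesis by simp
qed

theorem proposition1:
  fixes n tau :: nat
  assumes "0 < n" and "tau \<le> n"
  shows "((\<integral>\<^sup>+ \<omega>. ennreal (real (draws_to_complete tau \<omega>)) \<partial>draw_space n)
           = ennreal (real tau + (\<Sum>i=1..tau-1. real i / (real n - real i)))) \<and>
         (0.02 * real n < real tau \<and> real tau < 0.6 * real n \<longrightarrow>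
         measure (draw_space n) {\<omega> \<in> space (draw_space n). draws_to_complete tau \<omega> \<le> 2 * tau}
           \<ge> 1 - exp (- real n / 60))"
proof (intro conjI impI)
  show "(\<integral>\<^sup>+ \<omega>. ennreal (real (draws_to_complete tau \<omega>)) \<partial>draw_space n)
      = ennreal (real tau + (\<Sum>i=1..tau-1. real i / (real n - real i)))"
    using nn_integral_draws_to_complete[OF assms] suminf_incomplete_prob[OF assms, of 0]
      sum_n_div_n_minus_eq[OF assms(2)] by simp
next
  assume "0.02 * real n < real tau \<and> real tau < 0.6 * real n"
  then show "measure (draw_space n) {\<omega> \<in> space (draw_space n). draws_to_complete tau \<omega> \<le> 2 * tau}
      \<ge> 1 - exp (- real n / 60)"
    using incomplete_prob_twice_tau_le[OF assms(1)] measure_draws_to_complete_le[OF assms]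
    by (meson diff_left_mono order_trans)
qed

end
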